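(* Let $\varphi,\phi\in\mathbb{R}$ with $\varphi\neq 0$ and consider the two non-commuting reflection matrices in $\operatorname{SU}(1,1)$ $$M_A=\begin{pmatrix} i\cosh\varphi & e^{i\phi}\sinh\varphi\\ e^{-i\phi}\sinh\varphi & -i\cosh\varphi\end{pmatrix},\qquad M_B=\begin{pmatrix} i&0\\0&-i\end{pmatrix}.$$ Let $\Pi_n=M_1M_2\cdots M_n$ where each $M_j$ is drawn independently from $\{M_A,M_B\}$ with probabilities $p_A=p_B=1/2$, and write $\Pi_n=\begin{pmatrix}\alpha_n&\beta_n\\ \beta_n^*&\alpha_n^*\end{pmatrix}$. Define the (chiral) energy per unit cell $E(n)=\frac{\pi c}{12\,l}(|\alpha_n|^2+|\beta_n|^2)$. Then for even $n$, $\mathbb{E}(E(n+2))=\mathbb{E}(E(n))\cdot\cosh^2(\varphi)$, and $\mathbb{E}(E(n+1))=\mathbb{E}(E(n+2))$, so the ensemble-averaged energy grows exponentially with rate $\lambda_E:=\lim_{n\to\infty}\frac{1}{2n}\log\mathbb{E}(E(n))=\frac{1}{2}\log\cosh(\varphi)>0$.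
   Context: Randomly driven (1+1)d CFT with $\operatorname{SL}_2$ (single-wavelength) deformed Hamiltonians; each driving step acts on operators by a Möbius transformation given by an $\operatorname{SU}(1,1)$ matrix. A type I exceptional point is where both driving steps produce reflection (traceless) $\operatorname{SU}(1,1)$ matrices; after an $\operatorname{SU}(1,1)$ conjugation the two matrices can be brought to the form $M_A,M_B$ stated in the claim (a global conjugation does not affect the growth rate). Since $M_A^2=M_B^2=-\mathbb{I}$, for $n=2k$ any product containing $k-r+s$ factors $M_A$ and $k+s-r$ factors $M_B$ equals $(-1)^k\begin{pmatrix}\cosh((k-r-s)\varphi) & ie^{i\phi}\sinh((k-r-s)\varphi)\\ -ie^{-i\phi}\sinh((k-r-s)\varphi) & \cosh((k-r-s)\varphi)\end{pmatrix}$, occurring with total probability $p_{r,s}=2^{-n}\binom{k}{r}\binom{k}{s}$, giving $\mathbb{E}(E(n))=\frac{\pi c}{12 l}\sum_{r,s=0}^k p_{r,s}\cosh[2(k-r-s)\varphi]$. Here $c$ is the central charge and $l$ the deformation wavelength. *)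

theory Defs
  imports "HOL-Analysis.Analysis"
begin

definition mat2 :: "complex \<Rightarrow> complex \<Rightarrow> complex \<Rightarrow> complex \<Rightarrow> complex^2^2" where
  "mat2 a b c d = (\<chi> i j. if i = 1 then (if j = 1 then a else b) else (if j = 1 then c else d))"

definition M_A :: "real \<Rightarrow> real \<Rightarrow> complex^2^2" where
  "M_A \<phi>' \<phi> = mat2 (\<i> * of_real (cosh \<phi>')) (cis \<phi> * of_real (sinh \<phi>'))
                     (cis (- \<phi>) * of_real (sinh \<phi>')) (- \<i> * of_real (cosh \<phi>'))"

definition M_B :: "complex^2^2" where
  "M_B = mat2 \<i> 0 0 (- \<i>)"

definition Pi_prod :: "real \<Rightarrow> real \<Rightarrow> bool list \<Rightarrow> complex^2^2" where
  "Pi_prod \<phi>' \<phi> xs = foldr (\<lambda>b P. (if b then M_A \<phi>' \<phi> else M_B) ** P) xs (mat 1)"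

definition energy :: "real \<Rightarrow> real \<Rightarrow> complex^2^2 \<Rightarrow> real" where
  "energy c l P = pi * c / (12 * l) * ((cmod (P $ 1 $ 1))\<^sup>2 + (cmod (P $ 1 $ 2))\<^sup>2)"

text \<open>Ensemble average over i.i.d. choices with p_A = p_B = 1/2: uniform average over all
  2^n driving sequences of length n.\<close>
definition mean_energy :: "real \<Rightarrow> real \<Rightarrow> real \<Rightarrow> real \<Rightarrow> nat \<Rightarrow> real" where
  "mean_energy c l \<phi>' \<phi> n =
     (\<Sum>xs\<in>{xs :: bool list. length xs = n}. energy c l (Pi_prod \<phi>' \<phi> xs)) / 2 ^ n"

end

theory Submission
  imports Defs
begin

(* A matrix M = [[i c, w s], [cnj w s, -i c]] with |w| = 1 acts linearly, under left multiplication,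
   on the triple (squared norm of row 1, squared norm of row 2, Im (cnj w <row 1, row 2>)).
   Both M_A and M_B = M_A with (cosh, sinh) replaced by (1, 0) are of this form with the same phase
   w = cis phi, so the sums of the triple over all 2^n driving sequences satisfy a linear
   recurrence. Starting from the identity the two row sums stay equal, and on such balanced triples
   the averaged step is an involution scaled by 2 cosh phi'. Hence the mean energy is
   pi c / (12 l) * cosh phi' ^ (2 * ceiling (n / 2)), from which everything follows. *)

definition reflection :: "real \<Rightarrow> real \<Rightarrow> complex \<Rightarrow> complex^2^2" where
  "reflection c s w = mat2 (\<i> * c) (w * s) (cnj w * s) (- \<i> * c)"

lemma M_A_eq_reflection: "M_A a \<phi> = reflection (cosh a) (sinh a) (cis \<phi>)"
  by (simp add: M_A_def reflection_def cis_cnj)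

lemma M_B_eq_reflection: "M_B = reflection 1 0 w"
  by (simp add: M_B_def reflection_def)

lemma mat2_mult_nth:
  "(mat2 a b c d ** P) $ 1 $ 1 = a * P$1$1 + b * P$2$1"
  "(mat2 a b c d ** P) $ 1 $ 2 = a * P$1$2 + b * P$2$2"
  "(mat2 a b c d ** P) $ 2 $ 1 = c * P$1$1 + d * P$2$1"
  "(mat2 a b c d ** P) $ 2 $ 2 = c * P$1$2 + d * P$2$2"
  by (simp_all add: matrix_matrix_mult_def mat2_def sum_2)

definition upper_row_norm2 :: "complex^2^2 \<Rightarrow> real" where
  "upper_row_norm2 P = (cmod (P$1$1))\<^sup>2 + (cmod (P$1$2))\<^sup>2"

definition lower_row_norm2 :: "complex^2^2 \<Rightarrow> real" where
  "lower_row_norm2 P = (cmod (P$2$1))\<^sup>2 + (cmod (P$2$2))\<^sup>2"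

definition row_twist :: "complex \<Rightarrow> complex^2^2 \<Rightarrow> real" where
  "row_twist w P = Im (cnj w * (P$1$1 * cnj (P$2$1) + P$1$2 * cnj (P$2$2)))"

lemma of_real_Im: "complex_of_real (Im z) = (z - cnj z) / (2 * \<i>)"
  by (simp add: complex_eq_iff)

lemma
  fixes c s :: real
  assumes "cmod w = 1"
  shows upper_row_norm2_reflection_mult:
      "upper_row_norm2 (reflection c s w ** P)
         = c\<^sup>2 * upper_row_norm2 P + s\<^sup>2 * lower_row_norm2 P - 2 * c * s * row_twist w P"
    and lower_row_norm2_reflection_mult:
      "lower_row_norm2 (reflection c s w ** P)
         = s\<^sup>2 * upper_row_norm2 P + c\<^sup>2 * lower_row_norm2 P - 2 * c * s * row_twist w P"
    and row_twist_reflection_mult: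
      "row_twist w (reflection c s w ** P)
         = c * s * (upper_row_norm2 P + lower_row_norm2 P) - (c\<^sup>2 + s\<^sup>2) * row_twist w P"
proof -
  have w: "w * cnj w = 1"
    using assms complex_norm_square by (metis of_real_1 one_power2)
  have i: "\<i> * \<i> = -1"
    by simp
  note defs = upper_row_norm2_def lower_row_norm2_def row_twist_def reflection_def mat2_mult_nth
  note to_complex = of_real_eq_iff[where 'a = complex, symmetric] of_real_add of_real_mult
    of_real_diff complex_norm_square of_real_Im
  show "upper_row_norm2 (reflection c s w ** P)
         = c\<^sup>2 * upper_row_norm2 P + s\<^sup>2 * lower_row_norm2 P - 2 * c * s * row_twist w P"
    unfolding defs to_complex using w by (simp add: divide_simps) (use i in algebra)
  show "lower_row_norm2 (reflection c s w ** P)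
         = s\<^sup>2 * upper_row_norm2 P + c\<^sup>2 * lower_row_norm2 P - 2 * c * s * row_twist w P"
    unfolding defs to_complex using w by (simp add: divide_simps) (use i in algebra)
  show "row_twist w (reflection c s w ** P)
         = c * s * (upper_row_norm2 P + lower_row_norm2 P) - (c\<^sup>2 + s\<^sup>2) * row_twist w P"
    unfolding defs to_complex using w by (simp add: divide_simps) (use i in algebra)
qed

lemma sum_lists_length_Suc:
  "(\<Sum>xs\<in>{xs :: bool list. length xs = Suc n}. f xs)
    = (\<Sum>xs\<in>{xs. length xs = n}. f (True # xs) + f (False # xs))"
proof -
  have split: "{xs :: bool list. length xs = Suc n}
      = Cons True ` {xs. length xs = n} \<union> Cons False ` {xs. length xs = n}"
    by (auto simp: length_Suc_conv)
  have "finite {xs :: bool list. length xs = n}"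
    using finite_lists_length_eq[of "UNIV :: bool set" n] by simp
  then show ?thesis
    unfolding split by (subst sum.union_disjoint) (auto simp: sum.reindex sum.distrib)
qed

lemma Pi_prod_Cons: "Pi_prod a \<phi> (b # xs) = (if b then M_A a \<phi> else M_B) ** Pi_prod a \<phi> xs"
  by (simp add: Pi_prod_def)

definition upper_sum :: "real \<Rightarrow> real \<Rightarrow> nat \<Rightarrow> real" where
  "upper_sum a \<phi> n = (\<Sum>xs\<in>{xs. length xs = n}. upper_row_norm2 (Pi_prod a \<phi> xs))"

definition lower_sum :: "real \<Rightarrow> real \<Rightarrow> nat \<Rightarrow> real" where
  "lower_sum a \<phi> n = (\<Sum>xs\<in>{xs. length xs = n}. lower_row_norm2 (Pi_prod a \<phi> xs))"

definition twist_sum :: "real \<Rightarrow> real \<Rightarrow> nat \<Rightarrow> real" where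
  "twist_sum a \<phi> n = (\<Sum>xs\<in>{xs. length xs = n}. row_twist (cis \<phi>) (Pi_prod a \<phi> xs))"

lemma row_sums_Suc:
  "upper_sum a \<phi> (Suc n) = ((cosh a)\<^sup>2 + 1) * upper_sum a \<phi> n + (sinh a)\<^sup>2 * lower_sum a \<phi> n
     - 2 * cosh a * sinh a * twist_sum a \<phi> n"
  "lower_sum a \<phi> (Suc n) = (sinh a)\<^sup>2 * upper_sum a \<phi> n + ((cosh a)\<^sup>2 + 1) * lower_sum a \<phi> n
     - 2 * cosh a * sinh a * twist_sum a \<phi> n"
  "twist_sum a \<phi> (Suc n) = cosh a * sinh a * (upper_sum a \<phi> n + lower_sum a \<phi> n)
     - ((cosh a)\<^sup>2 + (sinh a)\<^sup>2 + 1) * twist_sum a \<phi> n"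
  unfolding upper_sum_def lower_sum_def twist_sum_def sum_lists_length_Suc Pi_prod_Cons
    M_A_eq_reflection M_B_eq_reflection[of "cis \<phi>"]
  by (simp_all add: upper_row_norm2_reflection_mult lower_row_norm2_reflection_mult
      row_twist_reflection_mult sum.distrib sum_subtractf sum_distrib_left algebra_simps)

(* On (u, u, t) the step acts on (u, t) as 2 cosh a * [[cosh a, -sinh a], [sinh a, -cosh a]],
   whose square is 4 (cosh a)^2 times the identity. *)
lemma row_sums_Suc_balanced:
  assumes "upper_sum a \<phi> n = u" and "lower_sum a \<phi> n = u" and "twist_sum a \<phi> n = t"
  shows "upper_sum a \<phi> (Suc n) = 2 * cosh a * (cosh a * u - sinh a * t)"
    and "lower_sum a \<phi> (Suc n) = 2 * cosh a * (cosh a * u - sinh a * t)"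
    and "twist_sum a \<phi> (Suc n) = 2 * cosh a * (sinh a * u - cosh a * t)"
  using hyperbolic_pythagoras[of a] unfolding row_sums_Suc assms by algebra+

lemma row_sums_two_steps:
  assumes "upper_sum a \<phi> n = u" and "lower_sum a \<phi> n = u" and "twist_sum a \<phi> n = 0"
  shows "upper_sum a \<phi> (Suc n) = 2 * (cosh a)\<^sup>2 * u"
    and "upper_sum a \<phi> (Suc (Suc n)) = 4 * (cosh a)\<^sup>2 * u"
    and "lower_sum a \<phi> (Suc (Suc n)) = 4 * (cosh a)\<^sup>2 * u"
    and "twist_sum a \<phi> (Suc (Suc n)) = 0"
proof -
  note step = row_sums_Suc_balanced[of a \<phi>]
  have odd: "upper_sum a \<phi> (Suc n) = 2 * (cosh a)\<^sup>2 * u"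
    "lower_sum a \<phi> (Suc n) = 2 * (cosh a)\<^sup>2 * u"
    "twist_sum a \<phi> (Suc n) = 2 * cosh a * sinh a * u"
    using step[OF assms] by (simp_all add: power2_eq_square)
  show "upper_sum a \<phi> (Suc n) = 2 * (cosh a)\<^sup>2 * u"
    by (fact odd(1))
  show "upper_sum a \<phi> (Suc (Suc n)) = 4 * (cosh a)\<^sup>2 * u"
    "lower_sum a \<phi> (Suc (Suc n)) = 4 * (cosh a)\<^sup>2 * u"
    "twist_sum a \<phi> (Suc (Suc n)) = 0"
    using step[OF odd] hyperbolic_pythagoras[of a] by algebra+
qed

lemma row_sums_even:
  "upper_sum a \<phi> (2 * k) = (2 * cosh a) ^ (2 * k) \<and> lower_sum a \<phi> (2 * k) = (2 * cosh a) ^ (2 * k)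
     \<and> twist_sum a \<phi> (2 * k) = 0"
proof (induction k)
  case 0
  have "{xs :: bool list. length xs = 0} = {[]}"
    by auto
  then show ?case
    by (simp add: upper_sum_def lower_sum_def twist_sum_def Pi_prod_def
        upper_row_norm2_def lower_row_norm2_def row_twist_def mat_def)
next
  case (Suc k)
  then show ?case
    using row_sums_two_steps[of a \<phi> "2 * k" "(2 * cosh a) ^ (2 * k)"] by (simp add: power2_eq_square)
qed

lemma upper_sum_eq: "upper_sum a \<phi> n = 2 ^ n * cosh a ^ (n + n mod 2)"
proof (cases "even n")
  case True
  then obtain k where "n = 2 * k" ..
  then show ?thesis
    using row_sums_even[of a \<phi> k] by (simp add: power_mult_distrib)
next
  case False
  define k where "k = n div 2"
  have n: "n = Suc (2 * k)"
    using False unfolding k_def by presburger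
  have "upper_sum a \<phi> n = 2 * (cosh a)\<^sup>2 * (2 * cosh a) ^ (2 * k)"
    unfolding n using row_sums_even[of a \<phi> k] by (intro row_sums_two_steps(1)) auto
  also have "\<dots> = 2 ^ n * cosh a ^ (n + n mod 2)"
    unfolding n by (simp add: power_mult_distrib power2_eq_square)
  finally show ?thesis .
qed

lemma mean_energy_eq: "mean_energy c l a \<phi> n = pi * c / (12 * l) * cosh a ^ (n + n mod 2)"
proof -
  have "mean_energy c l a \<phi> n = pi * c / (12 * l) * upper_sum a \<phi> n / 2 ^ n"
    unfolding mean_energy_def upper_sum_def energy_def upper_row_norm2_def
    by (simp add: sum_distrib_left)
  then show ?thesis
    by (simp add: upper_sum_eq)
qed

lemma tendsto_ln_power_parity:
  fixes K q :: real
  assumes "K > 0" and "q > 0"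
  shows "(\<lambda>n. ln (K * q ^ (n + n mod 2)) / (2 * real n)) \<longlonglongrightarrow> ln q / 2"
proof -
  define g where "g n = (ln K + real (n mod 2) * ln q) / 2" for n :: nat
  have "eventually (\<lambda>n. norm (g n) \<le> (\<bar>ln K\<bar> + \<bar>ln q\<bar>) / 2) sequentially"
    unfolding g_def by (intro always_eventually allI) (auto simp: mod_2_eq_odd)
  then have "(\<lambda>n. g n * inverse (real n)) \<longlonglongrightarrow> 0"
    by (rule lim_null_mult_left_bounded) (rule tendsto_inverse_0_at_top[OF filterlim_real_sequentially])
  then have "(\<lambda>n. ln q / 2 + g n * inverse (real n)) \<longlonglongrightarrow> ln q / 2"
    using tendsto_add[OF tendsto_const[of "ln q / 2"]] by fastforce
  moreover have "\<forall>\<^sub>F n in sequentially.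
      ln q / 2 + g n * inverse (real n) = ln (K * q ^ (n + n mod 2)) / (2 * real n)"
    using eventually_ge_at_top[of 1]
    by eventually_elim (use assms in \<open>simp add: g_def ln_mult ln_realpow field_simps\<close>)
  ultimately show ?thesis
    by (rule Lim_transform_eventually)
qed

theorem mainTheorem2:
  fixes \<phi>' \<phi> c l :: real
  assumes "\<phi>' \<noteq> 0" and "c > 0" and "l > 0"
  shows "(\<forall>n. even n \<longrightarrow>
            mean_energy c l \<phi>' \<phi> (n + 2) = mean_energy c l \<phi>' \<phi> n * (cosh \<phi>')\<^sup>2 \<and>
            mean_energy c l \<phi>' \<phi> (n + 1) = mean_energy c l \<phi>' \<phi> (n + 2))
       \<and> (\<lambda>n. ln (mean_energy c l \<phi>' \<phi> n) / (2 * real n)) \<longlonglongrightarrow> ln (cosh \<phi>') / 2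
       \<and> ln (cosh \<phi>') / 2 > 0"
proof (intro conjI allI impI)
  fix n :: nat
  assume "even n"
  then have "n mod 2 = 0" and "Suc n mod 2 = 1"
    by presburger+
  then show "mean_energy c l \<phi>' \<phi> (n + 2) = mean_energy c l \<phi>' \<phi> n * (cosh \<phi>')\<^sup>2"
    and "mean_energy c l \<phi>' \<phi> (n + 1) = mean_energy c l \<phi>' \<phi> (n + 2)"
    by (simp_all add: mean_energy_eq power_add power2_eq_square)
next
  have "pi * c / (12 * l) > 0"
    using assms by simp
  then show "(\<lambda>n. ln (mean_energy c l \<phi>' \<phi> n) / (2 * real n)) \<longlonglongrightarrow> ln (cosh \<phi>') / 2"
    unfolding mean_energy_eq by (rule tendsto_ln_power_parity) simp
next
  have "cosh \<phi>' > 1"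
    using cosh_real_ge_1[of \<phi>'] cosh_real_one_iff[of \<phi>'] assms(1) by linarith
  then show "ln (cosh \<phi>') / 2 > 0"
    by simp
qed

end
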